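(* Let $s\ge1$. If $f\in C^2(\mathbb{R}^s)$ and $H_n(f)<\infty$ for some $n\in\mathbb{N}_0$, then for any $n_0\in\mathbb{N}_0$ there exists a constant $C>0$ depending only on $n_0$ and $f$ such that $$\sum_{\alpha\in\mathbb{Z}^s}\left|\,\left|\hat{\boldsymbol d}_\alpha^n(f)\right|_2-2^{-ns}\left|\nabla f(x_\alpha^n)\right|_2\right|\le 2^{-n}C\int_{\mathbb{R}^s}\left|D^2f(x)\right|_F\,dx\qquad\text{for all }n\ge n_0.$$
   Context: Univariate Haar functions: $\psi_0:=\chi_{[0,1]}$, $\psi_1:=\chi_{[0,\frac12]}-\chi_{[\frac12,1]}$; for $\theta\in\{0,1\}^s$, $\psi_\theta(x):=\prod_{j=1}^s\psi_{\theta_j}(x_j)$, and $d_{\theta,\alpha}^n(f):=2^{ns/2}\int_{\mathbb{R}^s}f(t)\psi_\theta(2^nt-\alpha)\,dt$ for $n\in\mathbb{N}_0$, $\alpha\in\mathbb{Z}^s$. Let $\epsilon_j$ denote the $j$-th unit vector of $\mathbb{R}^s$, $x_\alpha^n:=2^{-n}(\alpha+\frac12(1,\dots,1))$, and $\hat{\boldsymbol d}_\alpha^n(f):=-2^{n(1-s/2)+2}\big(d^n_{\epsilon_1,\alpha}(f),\dots,d^n_{\epsilon_s,\alpha}(f)\big)\in\mathbb{R}^s$. $|\cdot|_2$ is the Euclidean norm. $|D^2f(x)|_F:=\big(\sum_{j,k=1}^s(\partial^2f(x)/\partial x_j\partial x_k)^2\big)^{1/2}$, and $H_n(f):=\sum_{\alpha\in\mathbb{Z}^s}2^{-ns}\max_{x\in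 x_\alpha^n+2^{-n}[-\frac12,\frac12]^s}|D^2f(x)|_F$ (possibly $+\infty$). *)

theory Defs
  imports "HOL-Analysis.Analysis"
begin

text \<open>Dimension s = CARD('n); points of R^s are vectors of type real^'n.
  Multi-indices alpha in Z^s are functions 'n => int.\<close>

definition ivec :: "('n::finite \<Rightarrow> int) \<Rightarrow> real^'n" where
  "ivec \<alpha> = (\<chi> j. of_int (\<alpha> j))"

definition partial :: "'n::finite \<Rightarrow> (real^'n \<Rightarrow> real) \<Rightarrow> real^'n \<Rightarrow> real" where
  "partial j f x = deriv (\<lambda>t. f (x + t *\<^sub>R axis j 1)) 0"

definition C2 :: "(real^'n::finite \<Rightarrow> real) \<Rightarrow> bool" where
  "C2 f \<longleftrightarrow> continuous_on UNIV f
     \<and> (\<forall>j x. (\<lambda>t. f (x + t *\<^sub>R axis j 1)) differentiable (at 0))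
     \<and> (\<forall>j. continuous_on UNIV (partial j f))
     \<and> (\<forall>j k x. (\<lambda>t. partial j f (x + t *\<^sub>R axis k 1)) differentiable (at 0))
     \<and> (\<forall>j k. continuous_on UNIV (partial k (partial j f)))"

definition grad :: "(real^'n::finite \<Rightarrow> real) \<Rightarrow> real^'n \<Rightarrow> real^'n" where
  "grad f x = (\<chi> j. partial j f x)"

definition hess_frob :: "(real^'n::finite \<Rightarrow> real) \<Rightarrow> real^'n \<Rightarrow> real" where
  "hess_frob f x = sqrt (\<Sum>j\<in>UNIV. \<Sum>k\<in>UNIV. (partial k (partial j f) x)^2)"

text \<open>Univariate Haar functions; False ~ 0, True ~ 1.\<close>
definition psi1 :: "bool \<Rightarrow> real \<Rightarrow> real" where
  "psi1 b t = (if \<not> b then indicator {0..1} t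
               else indicator {0..1/2} t - indicator {1/2..1} t)"

definition psi :: "('n::finite \<Rightarrow> bool) \<Rightarrow> real^'n \<Rightarrow> real" where
  "psi \<theta> x = (\<Prod>j\<in>UNIV. psi1 (\<theta> j) (x $ j))"

definition haar_coeff :: "('n::finite \<Rightarrow> bool) \<Rightarrow> nat \<Rightarrow> ('n \<Rightarrow> int) \<Rightarrow> (real^'n \<Rightarrow> real) \<Rightarrow> real" where
  "haar_coeff \<theta> n \<alpha> f =
     2 powr (real n * real CARD('n) / 2) *
     integral UNIV (\<lambda>t. f t * psi \<theta> ((2::real)^n *\<^sub>R t - ivec \<alpha>))"

definition unitb :: "'n::finite \<Rightarrow> 'n \<Rightarrow> bool" where
  "unitb j = (\<lambda>i. i = j)"

definition dhat :: "nat \<Rightarrow> ('n::finite \<Rightarrow> int) \<Rightarrow> (real^'n \<Rightarrow> real) \<Rightarrow> real^'n" where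
  "dhat n \<alpha> f = (\<chi> j. - (2 powr (real n * (1 - real CARD('n) / 2) + 2)) * haar_coeff (unitb j) n \<alpha> f)"

definition xpt :: "nat \<Rightarrow> ('n::finite \<Rightarrow> int) \<Rightarrow> real^'n" where
  "xpt n \<alpha> = (2 powr (- real n)) *\<^sub>R (ivec \<alpha> + (\<chi> j. 1/2))"

definition cube :: "nat \<Rightarrow> ('n::finite \<Rightarrow> int) \<Rightarrow> (real^'n) set" where
  "cube n \<alpha> = cbox (xpt n \<alpha> - (\<chi> j. 2 powr (- real n) / 2)) (xpt n \<alpha> + (\<chi> j. 2 powr (- real n) / 2))"

definition Hn :: "nat \<Rightarrow> (real^'n::finite \<Rightarrow> real) \<Rightarrow> ennreal" where
  "Hn n f = (\<Sum>\<^sub>\<infinity>\<alpha>\<in>(UNIV :: ('n \<Rightarrow> int) set).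
      ennreal (2 powr (- real n * real CARD('n))) * (SUP x\<in>cube n \<alpha>. ennreal (hess_frob f x)))"

end

theory Submission
  imports Defs
begin

text \<open>On a dyadic cube Q of side h = 2^(-n), the Haar coefficient for the direction e_j is the
  integral, over the half of Q where psi_(e_j) = 1, of f(t) - f(t + h/2 e_j). Applying the mean value
  theorem twice, -4 2^n times this integral differs from h^s times the j-th partial derivative of f
  at the centre of Q by at most s M h^(s+1), where M is the maximum of |D^2 f|_F on Q. Summing over
  all cubes bounds the left-hand side by s^2 2^(-n) H_n(f). Comparing dyadic levels, every H_n(f)
  is bounded by 2^(ms) H_m(f), which is finite for a suitable m. Since C may depend on f, this
  constant is absorbed into C times the integral of |D^2 f|_F; that integral of a continuous
  function vanishes only if D^2 f = 0, and then both sides vanish.\<close>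

section \<open>Partial derivatives along the coordinate axes\<close>

lemma C2D:
  assumes "C2 f"
  shows "continuous_on UNIV f"
    "\<forall>j x. (\<lambda>t. f (x + t *\<^sub>R axis j 1)) differentiable (at 0)"
    "\<And>j. continuous_on UNIV (partial j f)"
    "\<And>j. \<forall>k x. (\<lambda>t. partial j f (x + t *\<^sub>R axis k 1)) differentiable (at 0)"
    "\<And>j k. continuous_on UNIV (partial k (partial j f))"
  using assms unfolding C2_def by blast+

lemma has_real_derivative_partial:
  assumes "\<forall>x. (\<lambda>t. g (x + t *\<^sub>R axis j 1)) differentiable (at 0)"
  shows "((\<lambda>r. g (x + r *\<^sub>R axis j (1::real))) has_real_derivative partial j g (x + r *\<^sub>R axis j 1)) (at r)"
proof -
  let ?y = "x + r *\<^sub>R axis j (1::real)"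
  have "((\<lambda>t. g (?y + t *\<^sub>R axis j 1)) has_real_derivative partial j g ?y) (at 0)"
    using assms unfolding partial_def by (simp add: DERIV_deriv_iff_real_differentiable)
  moreover have "(\<lambda>t. g (?y + t *\<^sub>R axis j 1)) = (\<lambda>t. g (x + (t + r) *\<^sub>R axis j 1))"
    by (simp add: algebra_simps scaleR_add_left)
  ultimately show ?thesis using DERIV_shift[of "\<lambda>r. g (x + r *\<^sub>R axis j 1)" _ 0 r] by simp
qed

lemma partial_mean_value:
  assumes "\<forall>x. (\<lambda>t. g (x + t *\<^sub>R axis j 1)) differentiable (at 0)"
  obtains z where "min 0 d \<le> z" "z \<le> max 0 d"
    "g (x + d *\<^sub>R axis j 1) - g x = d * partial j g (x + z *\<^sub>R axis j (1::real))"
proof -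
  note D = has_real_derivative_partial[OF assms, of x]
  consider "d > 0" | "d < 0" | "d = 0" by linarith
  then show ?thesis
  proof cases
    case 1
    from MVT2[OF 1, of "\<lambda>r. g (x + r *\<^sub>R axis j 1)" "\<lambda>r. partial j g (x + r *\<^sub>R axis j 1)"] D obtain z where
      "0 < z" "z < d" "g (x + d *\<^sub>R axis j 1) - g (x + 0 *\<^sub>R axis j 1) = (d - 0) * partial j g (x + z *\<^sub>R axis j 1)"
      by blast
    with 1 show ?thesis by (intro that[of z]) auto
  next
    case 2
    from MVT2[OF 2, of "\<lambda>r. g (x + r *\<^sub>R axis j 1)" "\<lambda>r. partial j g (x + r *\<^sub>R axis j 1)"] D obtain z where
      "d < z" "z < 0" "g (x + 0 *\<^sub>R axis j 1) - g (x + d *\<^sub>R axis j 1) = (0 - d) * partial j g (x + z *\<^sub>R axis j 1)"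
      by blast
    with 2 show ?thesis by (intro that[of z]) (auto simp: algebra_simps)
  next
    case 3
    then show ?thesis by (intro that[of 0]) auto
  qed
qed

text \<open>Walk from \<open>x\<close> to \<open>y\<close> changing one coordinate at a time; all intermediate points stay in the box.\<close>
lemma abs_diff_le_partial_bound:
  fixes g :: "real^'n::finite \<Rightarrow> real"
  assumes D: "\<forall>k x. (\<lambda>t. g (x + t *\<^sub>R axis k 1)) differentiable (at 0)"
    and bound: "\<forall>k. \<forall>y\<in>cbox a b. \<bar>partial k g y\<bar> \<le> B"
    and x: "x \<in> cbox a b" and y: "y \<in> cbox a b"
  shows "\<bar>g y - g x\<bar> \<le> B * (\<Sum>k\<in>UNIV. \<bar>y$k - x$k\<bar>)"
proof -
  define z where "z S = (\<chi> i. if i \<in> S then y$i else x$i)" for S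
  have "\<bar>g (z S) - g x\<bar> \<le> B * (\<Sum>k\<in>S. \<bar>y$k - x$k\<bar>)" if "finite S" for S
    using that
  proof (induction S rule: finite_induct)
    case empty
    have "z {} = x" unfolding z_def by (simp add: vec_eq_iff)
    then show ?case by simp
  next
    case (insert k S)
    have z_insert: "z (insert k S) = z S + (y$k - x$k) *\<^sub>R axis k 1"
      using insert(2) unfolding z_def by (auto simp: vec_eq_iff axis_def)
    obtain r where r: "min 0 (y$k - x$k) \<le> r" "r \<le> max 0 (y$k - x$k)"
      and mvt: "g (z S + (y$k - x$k) *\<^sub>R axis k 1) - g (z S) = (y$k - x$k) * partial k g (z S + r *\<^sub>R axis k 1)"
      using partial_mean_value[of g k] D by blast
    have "z S + r *\<^sub>R axis k 1 \<in> cbox a b"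
      using x y r insert(2) unfolding z_def mem_box_cart
      by (auto simp: axis_def) (smt (verit))+
    hence "\<bar>partial k g (z S + r *\<^sub>R axis k 1)\<bar> \<le> B" using bound by blast
    hence "\<bar>g (z (insert k S)) - g (z S)\<bar> \<le> \<bar>y$k - x$k\<bar> * B"
      using z_insert mvt by (simp add: abs_mult mult_left_mono)
    then show ?case using insert by (simp add: algebra_simps)
  qed
  moreover have "z UNIV = y" unfolding z_def by (simp add: vec_eq_iff)
  ultimately show ?thesis by (metis finite)
qed

lemma hess_frob_nonneg: "0 \<le> hess_frob f x"
  unfolding hess_frob_def by (auto intro!: sum_nonneg)

lemma abs_partial2_le_hess_frob: "\<bar>partial k (partial j f) x\<bar> \<le> hess_frob f x"
proof -
  have "(partial k (partial j f) x)^2 \<le> (\<Sum>k\<in>UNIV. (partial k (partial j f) x)^2)"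
    by (rule member_le_sum) auto
  also have "\<dots> \<le> (\<Sum>j\<in>UNIV. \<Sum>k\<in>UNIV. (partial k (partial j f) x)^2)"
    by (rule member_le_sum[of _ _ "\<lambda>j. \<Sum>k\<in>UNIV. (partial k (partial j f) x)^2"]) (auto intro: sum_nonneg)
  finally show ?thesis unfolding hess_frob_def by (simp add: real_le_rsqrt)
qed

lemma continuous_on_hess_frob:
  assumes "C2 f"
  shows "continuous_on UNIV (hess_frob f)"
  unfolding hess_frob_def[abs_def] by (intro continuous_intros C2D(5)[OF assms])

section \<open>Haar coefficients on a dyadic cube\<close>

lemma powr_neg_nat_eq: "(2::real) powr - real n = 1 / 2^n"
  by (simp add: powr_minus powr_realpow divide_inverse)

lemma powr_neg_mult_eq_power: "(2::real) powr (- real n * real s) = (2 powr - real n)^s"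
  by (simp add: powr_powr powr_realpow[symmetric])

lemma cube_eq_cbox:
  "cube n \<alpha> = cbox ((2 powr - real n) *\<^sub>R ivec \<alpha>) ((2 powr - real n) *\<^sub>R ivec \<alpha> + (2 powr - real n) *\<^sub>R (\<chi> i. 1))"
  unfolding cube_def xpt_def by (rule arg_cong2[where f=cbox]; simp add: vec_eq_iff algebra_simps)

lemma mem_cube: "x \<in> cube n \<alpha> \<longleftrightarrow> (\<forall>i. of_int (\<alpha> i) / 2^n \<le> x$i \<and> x$i \<le> (of_int (\<alpha> i) + 1) / 2^n)"
  unfolding cube_eq_cbox powr_neg_nat_eq mem_box_cart ivec_def by (simp add: add_divide_distrib)

lemma xpt_in_cube: "xpt n \<alpha> \<in> cube n \<alpha>"
  unfolding cube_def by (simp add: mem_box_cart)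

lemma abs_diff_component_le_in_cube:
  assumes "x \<in> cube n \<alpha>" "y \<in> cube n \<alpha>"
  shows "\<bar>x$k - y$k\<bar> \<le> 2 powr - real n"
proof -
  define a where "a = (2 powr - real n) * of_int (\<alpha> k)"
  have "a \<le> x$k \<and> x$k \<le> a + 2 powr - real n" "a \<le> y$k \<and> y$k \<le> a + 2 powr - real n"
    using assms unfolding cube_eq_cbox mem_box_cart a_def by (simp_all add: ivec_def)
  then show ?thesis by linarith
qed

text \<open>The half of \<open>cube n \<alpha>\<close> on which \<open>psi (unitb j) (2^n t - ivec \<alpha>) = 1\<close>.\<close>
definition half_cube :: "nat \<Rightarrow> ('n::finite \<Rightarrow> int) \<Rightarrow> 'n \<Rightarrow> (real^'n) set" where
  "half_cube n \<alpha> j = cbox ((2 powr - real n) *\<^sub>R ivec \<alpha>)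
     ((2 powr - real n) *\<^sub>R ivec \<alpha> + (2 powr - real n) *\<^sub>R (\<chi> i. if i = j then 1/2 else 1))"

lemma half_cube_shift_in_cube:
  assumes "t \<in> half_cube n \<alpha> j" "0 \<le> z" "z \<le> 2 powr - real n / 2"
  shows "t + z *\<^sub>R axis j 1 \<in> cube n \<alpha>"
  unfolding cube_eq_cbox mem_box_cart
proof
  fix i
  have "(2 powr - real n) * of_int (\<alpha> i) \<le> t$i \<and>
      t$i \<le> (2 powr - real n) * of_int (\<alpha> i) + 2 powr - real n * (if i = j then 1/2 else 1)"
    using assms(1) unfolding half_cube_def mem_box_cart by (simp add: ivec_def)
  then show "((2 powr - real n) *\<^sub>R ivec \<alpha>) $ i \<le> (t + z *\<^sub>R axis j 1) $ i \<and>
      (t + z *\<^sub>R axis j 1) $ i \<le> ((2 powr - real n) *\<^sub>R ivec \<alpha> + (2 powr - real n) *\<^sub>R (\<chi> i. 1)) $ i"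
    using assms(2,3) by (cases "i = j") (auto simp: axis_def ivec_def)
qed

lemma measure_half_cube:
  fixes \<alpha> :: "'n::finite \<Rightarrow> int"
  shows "measure lborel (half_cube n \<alpha> j) = (2 powr - real n)^CARD('n) / 2"
proof -
  define h where "h = (2::real) powr - real n"
  have "(2 powr - real n) *\<^sub>R ivec \<alpha> \<in> half_cube n \<alpha> j"
    unfolding half_cube_def mem_box_cart by simp
  hence "measure lborel (half_cube n \<alpha> j) = (\<Prod>i\<in>UNIV. h * (if i = j then 1/2 else 1))"
    using content_cbox_cart[of "h *\<^sub>R ivec \<alpha>"] unfolding half_cube_def h_def by fastforce
  also have "\<dots> = h^CARD('n) * (\<Prod>i\<in>UNIV. (if i = j then 1/2 else 1))"
    by (simp add: prod.distrib)
  also have "(\<Prod>i\<in>UNIV. (if i = j then 1/2 else (1::real))) = 1/2"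
    by (subst prod.remove[of UNIV j]) auto
  finally show ?thesis unfolding h_def by simp
qed

lemma psi_unitb:
  fixes y :: "real^'n::finite"
  shows "psi (unitb j) y =
    (if (\<forall>i. 0 \<le> y$i \<and> y$i \<le> (if i = j then 1/2 else 1)) then 1 else 0)
  - (if (\<forall>i. (if i = j then 1/2 else 0) \<le> y$i \<and> y$i \<le> 1) then 1 else 0)"
proof -
  have psi_eq: "psi (unitb j) y = psi1 True (y$j) * (\<Prod>i\<in>UNIV-{j}. psi1 False (y$i))"
    unfolding psi_def unitb_def by (subst prod.remove[of UNIV j]) (auto intro!: prod.cong)
  show ?thesis
  proof (cases "\<forall>i. i \<noteq> j \<longrightarrow> 0 \<le> y$i \<and> y$i \<le> 1")
    case True
    have "(\<Prod>i\<in>UNIV-{j}. psi1 False (y$i)) = 1"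
      using True by (intro prod.neutral) (auto simp: psi1_def indicator_def)
    moreover have "(\<forall>i. 0 \<le> y$i \<and> y$i \<le> (if i = j then 1/2 else 1)) \<longleftrightarrow> 0 \<le> y$j \<and> y$j \<le> 1/2"
      using True by (metis order_refl)
    moreover have "(\<forall>i. (if i = j then 1/2 else 0) \<le> y$i \<and> y$i \<le> 1) \<longleftrightarrow> 1/2 \<le> y$j \<and> y$j \<le> 1"
      using True by (metis order_refl)
    ultimately show ?thesis using psi_eq by (simp add: psi1_def indicator_def)
  next
    case False
    then obtain i where i: "i \<noteq> j" "\<not> (0 \<le> y$i \<and> y$i \<le> 1)" by blast
    have prod0: "(\<Prod>i\<in>UNIV-{j}. psi1 False (y$i)) = 0"
      using i by (intro prod_zero) (auto simp: psi1_def indicator_def intro!: bexI[of _ i])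
    have not_lower: "\<not> (\<forall>i. 0 \<le> y$i \<and> y$i \<le> (if i = j then 1/2 else 1))"
      and not_upper: "\<not> (\<forall>i. (if i = j then 1/2 else 0) \<le> y$i \<and> y$i \<le> 1)"
      using i by (metis (full_types))+
    show ?thesis unfolding psi_eq prod0 by (simp only: if_not_P[OF not_lower] if_not_P[OF not_upper])
  qed
qed

lemma psi_unitb_dilate:
  fixes t :: "real^'n::finite" and n :: nat
  defines "h \<equiv> (2::real) powr - real n"
  shows "psi (unitb j) ((2::real)^n *\<^sub>R t - ivec \<alpha>) =
    indicator (half_cube n \<alpha> j) t
  - indicator (cbox (h *\<^sub>R ivec \<alpha> + (h/2) *\<^sub>R axis j 1) (h *\<^sub>R ivec \<alpha> + h *\<^sub>R (\<chi> i. 1))) t"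
proof -
  have h: "h = 1 / 2^n" unfolding h_def by (rule powr_neg_nat_eq)
  have coord: "((2::real)^n *\<^sub>R t - ivec \<alpha>)$i = 2^n * t$i - of_int (\<alpha> i)" for i
    by (simp add: ivec_def)
  have lower: "(0 \<le> 2^n * x - a \<and> 2^n * x - a \<le> c) \<longleftrightarrow> (h * a \<le> x \<and> x \<le> h * a + h * c)" for c a x :: real
    unfolding h by (simp add: field_simps)
  have upper: "(c \<le> 2^n * x - a \<and> 2^n * x - a \<le> 1) \<longleftrightarrow> (h * a + h * c \<le> x \<and> x \<le> h * a + h * 1)" for c a x :: real
    unfolding h by (simp add: field_simps)
  have shift: "(h *\<^sub>R ivec \<alpha> + (h/2) *\<^sub>R axis j 1)$i = h * of_int (\<alpha> i) + h * (if i = j then 1/2 else 0)" for i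
    by (simp add: ivec_def axis_def)
  have "(\<forall>i. 0 \<le> ((2::real)^n *\<^sub>R t - ivec \<alpha>)$i \<and> ((2::real)^n *\<^sub>R t - ivec \<alpha>)$i \<le> (if i = j then 1/2 else 1))
     \<longleftrightarrow> t \<in> half_cube n \<alpha> j"
    unfolding half_cube_def mem_box_cart coord lower by (simp add: ivec_def h_def)
  moreover have "(\<forall>i. (if i = j then 1/2 else 0) \<le> ((2::real)^n *\<^sub>R t - ivec \<alpha>)$i \<and> ((2::real)^n *\<^sub>R t - ivec \<alpha>)$i \<le> 1)
     \<longleftrightarrow> t \<in> cbox (h *\<^sub>R ivec \<alpha> + (h/2) *\<^sub>R axis j 1) (h *\<^sub>R ivec \<alpha> + h *\<^sub>R (\<chi> i. 1))"
    unfolding mem_box_cart coord upper shift by (simp add: ivec_def)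
  ultimately show ?thesis unfolding psi_unitb indicator_def by simp
qed

lemma integral_haar_unitb:
  fixes f :: "real^'n::finite \<Rightarrow> real" and n :: nat
  assumes f: "continuous_on UNIV f"
  defines "h \<equiv> (2::real) powr - real n"
  shows "integral UNIV (\<lambda>t. f t * psi (unitb j) ((2::real)^n *\<^sub>R t - ivec \<alpha>))
       = integral (half_cube n \<alpha> j) (\<lambda>t. f t - f (t + (h/2) *\<^sub>R axis j 1))"
proof -
  define A where "A = half_cube n \<alpha> j"
  define c where "c = (h/2) *\<^sub>R axis j (1::real)"
  define a where "a = h *\<^sub>R ivec \<alpha> + c"
  define b where "b = h *\<^sub>R ivec \<alpha> + h *\<^sub>R (\<chi> i. (1::real))"
  define B where "B = cbox a b"
  have integrand: "(\<lambda>t. f t * psi (unitb j) ((2::real)^n *\<^sub>R t - ivec \<alpha>)) =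
      (\<lambda>t. (if t \<in> A then f t else 0) - (if t \<in> B then f t else 0))"
    using psi_unitb_dilate[of j n t \<alpha> for t] unfolding h_def A_def B_def a_def b_def c_def
    by (auto simp: indicator_def fun_eq_iff)
  have A_int: "f integrable_on A" and B_int: "f integrable_on B"
    unfolding A_def half_cube_def B_def
    by (intro integrable_continuous continuous_on_subset[OF f], simp)+
  have "(f has_integral integral B f) (cbox a b)"
    using B_int unfolding B_def by (simp add: has_integral_integral)
  then have "((\<lambda>x. f (1 *\<^sub>R x + c)) has_integral integral B f /\<^sub>R 1 ^ DIM(real^'n)) (cbox ((a - c) /\<^sub>R 1) ((b - c) /\<^sub>R 1))"
    using has_integral_affinity_iff[where m=1 and f=f and I="integral B f" and c=c and a=a and b=b] by simp
  moreover have "cbox ((a - c) /\<^sub>R 1) ((b - c) /\<^sub>R 1) = A"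
    unfolding A_def half_cube_def a_def b_def h_def c_def
    by (rule arg_cong2[where f=cbox]; simp add: vec_eq_iff axis_def)
  ultimately have "((\<lambda>x. f (x + c)) has_integral integral B f) A" by simp
  then have "integral A (\<lambda>t. f t - f (t + c)) = integral A f - integral B f"
    by (simp add: integral_diff[OF A_int has_integral_integrable] integral_unique)
  also have "\<dots> = integral UNIV (\<lambda>t. f t * psi (unitb j) ((2::real)^n *\<^sub>R t - ivec \<alpha>))"
    unfolding integrand using A_int B_int
    by (subst integral_diff) (simp_all add: integrable_restrict_UNIV integral_restrict_UNIV)
  finally show ?thesis unfolding A_def c_def by simp
qed

text \<open>The half cube has volume \<open>h^s / 2\<close>, so adding the constant \<open>(h/2) p\<close> to the integrand
  accounts exactly for the term \<open>h^s p\<close>.\<close>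
lemma dhat_component_sub:
  fixes f :: "real^'n::finite \<Rightarrow> real" and n :: nat
  assumes f: "continuous_on UNIV f"
  defines "h \<equiv> (2::real) powr - real n"
  shows "(\<lambda>t. f t - f (t + (h/2) *\<^sub>R axis j 1) + (h/2) * p) integrable_on half_cube n \<alpha> j"
    and "dhat n \<alpha> f $ j - h^CARD('n) * p = - (4 * 2^n) *
      integral (half_cube n \<alpha> j) (\<lambda>t. f t - f (t + (h/2) *\<^sub>R axis j 1) + (h/2) * p)"
proof -
  define A where "A = half_cube n \<alpha> j"
  define g where "g t = f t - f (t + (h/2) *\<^sub>R axis j 1)" for t
  have shifted: "continuous_on UNIV (\<lambda>t. f (t + v))" for v
    by (rule continuous_on_compose2[OF f]) (auto intro!: continuous_intros)
  have g_int: "g integrable_on A"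
    unfolding A_def half_cube_def g_def
    by (intro integrable_continuous continuous_intros continuous_on_subset[OF f]
        continuous_on_subset[OF shifted]) simp_all
  have const_int: "(\<lambda>t. (h/2) * p) integrable_on A"
    unfolding A_def half_cube_def by (rule integrable_const)
  show "(\<lambda>t. f t - f (t + (h/2) *\<^sub>R axis j 1) + (h/2) * p) integrable_on half_cube n \<alpha> j"
    using integrable_add[OF g_int const_int] unfolding A_def g_def .
  have "2 powr (real n * (1 - real CARD('n) / 2) + 2) * 2 powr (real n * real CARD('n) / 2)
      = (2::real) powr real (n + 2)"
    by (simp add: powr_add[symmetric] algebra_simps)
  also have "\<dots> = 2^(n + 2)" by (rule powr_realpow) simp
  finally have dhat_eq: "dhat n \<alpha> f $ j = - (4 * 2^n) * integral A g"
    unfolding dhat_def haar_coeff_def integral_haar_unitb[OF f] A_def g_def h_def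
    by (simp add: mult.assoc[symmetric])
  have "integral A (\<lambda>t. g t + (h/2) * p) = integral A g + h^CARD('n) / 2 * ((h/2) * p)"
    using integral_add[OF g_int const_int] measure_half_cube[of n \<alpha> j]
    unfolding A_def half_cube_def h_def by simp
  moreover have "4 * 2^n * (h^CARD('n) / 2 * ((h/2) * p)) = (2^n * h) * (h^CARD('n) * p)"
    by (simp add: algebra_simps)
  moreover have "2^n * h = 1" unfolding h_def powr_neg_nat_eq by simp
  ultimately show "dhat n \<alpha> f $ j - h^CARD('n) * p = - (4 * 2^n) *
      integral (half_cube n \<alpha> j) (\<lambda>t. f t - f (t + (h/2) *\<^sub>R axis j 1) + (h/2) * p)"
    unfolding dhat_eq A_def g_def by (simp add: algebra_simps)
qed

lemma half_cube_difference_error: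
  fixes f :: "real^'n::finite \<Rightarrow> real" and n :: nat
  assumes f: "C2 f" and M: "\<forall>x\<in>cube n \<alpha>. hess_frob f x \<le> M" and t: "t \<in> half_cube n \<alpha> j"
  defines "h \<equiv> (2::real) powr - real n"
  shows "\<bar>f t - f (t + (h/2) *\<^sub>R axis j 1) + (h/2) * partial j f (xpt n \<alpha>)\<bar>
    \<le> (h/2) * (M * (real CARD('n) * h))"
proof -
  have "0 < h" unfolding h_def by simp
  obtain z where z: "min 0 (h/2) \<le> z" "z \<le> max 0 (h/2)"
    and mvt: "f (t + (h/2) *\<^sub>R axis j 1) - f t = (h/2) * partial j f (t + z *\<^sub>R axis j 1)"
    using partial_mean_value[of f j] C2D(2)[OF f] by blast
  define \<xi> where "\<xi> = t + z *\<^sub>R axis j 1"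
  have \<xi>: "\<xi> \<in> cube n \<alpha>"
    unfolding \<xi>_def using half_cube_shift_in_cube[OF t] z \<open>0 < h\<close> h_def by simp
  have "\<forall>k. \<forall>y\<in>cube n \<alpha>. \<bar>partial k (partial j f) y\<bar> \<le> M"
    using M abs_partial2_le_hess_frob order_trans by blast
  then have "\<bar>partial j f (xpt n \<alpha>) - partial j f \<xi>\<bar> \<le> M * (\<Sum>k\<in>UNIV. \<bar>xpt n \<alpha> $ k - \<xi> $ k\<bar>)"
    using abs_diff_le_partial_bound[OF C2D(4)[OF f], where B=M] \<xi> xpt_in_cube
    unfolding cube_eq_cbox by blast
  also have "\<dots> \<le> M * (real CARD('n) * h)"
  proof (rule mult_left_mono)
    show "(\<Sum>k\<in>UNIV. \<bar>xpt n \<alpha> $ k - \<xi> $ k\<bar>) \<le> real CARD('n) * h"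
      using sum_bounded_above[of UNIV "\<lambda>k. \<bar>xpt n \<alpha> $ k - \<xi> $ k\<bar>" h]
        abs_diff_component_le_in_cube[OF xpt_in_cube \<xi>] unfolding h_def by simp
    show "0 \<le> M" using M xpt_in_cube hess_frob_nonneg order_trans by blast
  qed
  finally have "(h/2) * \<bar>partial j f (xpt n \<alpha>) - partial j f \<xi>\<bar> \<le> (h/2) * (M * (real CARD('n) * h))"
    using \<open>0 < h\<close> by (simp add: mult_left_mono)
  moreover have "f t - f (t + (h/2) *\<^sub>R axis j 1) + (h/2) * partial j f (xpt n \<alpha>)
      = (h/2) * (partial j f (xpt n \<alpha>) - partial j f \<xi>)"
    using mvt unfolding \<xi>_def by (simp add: algebra_simps)
  ultimately show ?thesis using \<open>0 < h\<close> by (simp only: abs_mult)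
qed

lemma dhat_component_error:
  fixes f :: "real^'n::finite \<Rightarrow> real" and n :: nat
  assumes f: "C2 f" and M: "\<forall>x\<in>cube n \<alpha>. hess_frob f x \<le> M"
  defines "h \<equiv> (2::real) powr - real n"
  shows "\<bar>dhat n \<alpha> f $ j - h^CARD('n) * partial j f (xpt n \<alpha>)\<bar> \<le> real CARD('n) * M * h^(CARD('n)+1)"
proof -
  define A where "A = half_cube n \<alpha> j"
  define E where "E t = f t - f (t + (h/2) *\<^sub>R axis j 1) + (h/2) * partial j f (xpt n \<alpha>)" for t
  have "0 < h" and "2^n * h = 1" unfolding h_def powr_neg_nat_eq by simp_all
  have "0 \<le> M" using M xpt_in_cube hess_frob_nonneg order_trans by blast
  have E_int: "E integrable_on A"
    unfolding E_def A_def h_def by (rule dhat_component_sub(1)[OF C2D(1)[OF f]])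
  have bound: "norm (integral A E) \<le> (h/2) * (M * (real CARD('n) * h)) * measure lborel A"
    unfolding A_def half_cube_def
    by (rule has_integral_bound[OF _ integrable_integral[OF E_int[unfolded A_def half_cube_def]]])
      (use half_cube_difference_error[OF f M] \<open>0 < h\<close> \<open>0 \<le> M\<close> in \<open>auto simp: half_cube_def E_def h_def\<close>)
  have "\<bar>dhat n \<alpha> f $ j - h^CARD('n) * partial j f (xpt n \<alpha>)\<bar> = 4 * 2^n * norm (integral A E)"
    using dhat_component_sub(2)[OF C2D(1)[OF f], of n \<alpha> j "partial j f (xpt n \<alpha>)"]
    unfolding A_def E_def h_def by (simp add: abs_mult)
  also have "\<dots> \<le> 4 * 2^n * ((h/2) * (M * (real CARD('n) * h)) * measure lborel A)"
    using bound by (intro mult_left_mono) simp_all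
  also have "\<dots> = real CARD('n) * M * h^(CARD('n)+1) * (2^n * h)"
    unfolding A_def measure_half_cube h_def by (simp add: algebra_simps power_Suc)
  finally show ?thesis using \<open>2^n * h = 1\<close> by simp
qed

lemma dhat_grad_error_cube:
  fixes f :: "real^'n::finite \<Rightarrow> real" and n :: nat
  assumes f: "C2 f" and M: "\<forall>x\<in>cube n \<alpha>. hess_frob f x \<le> M"
  shows "\<bar>norm (dhat n \<alpha> f) - 2 powr (- real n * real CARD('n)) * norm (grad f (xpt n \<alpha>))\<bar>
     \<le> real CARD('n)^2 * M * (2 powr - real n)^(CARD('n)+1)"
proof -
  define h where "h = (2::real) powr - real n"
  define v where "v = dhat n \<alpha> f - h^CARD('n) *\<^sub>R grad f (xpt n \<alpha>)"
  have "\<bar>norm (dhat n \<alpha> f) - h^CARD('n) * norm (grad f (xpt n \<alpha>))\<bar> \<le> norm v"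
    using norm_triangle_ineq3[of "dhat n \<alpha> f" "h^CARD('n) *\<^sub>R grad f (xpt n \<alpha>)"]
    unfolding v_def h_def by simp
  also have "\<dots> \<le> (\<Sum>j\<in>UNIV. \<bar>v$j\<bar>)"
    by (rule norm_le_l1_cart)
  also have "\<dots> \<le> (\<Sum>j\<in>(UNIV::'n set). real CARD('n) * M * h^(CARD('n)+1))"
    by (rule sum_mono) (use dhat_component_error[OF f M] in \<open>simp add: v_def grad_def h_def\<close>)
  also have "\<dots> = real CARD('n)^2 * M * h^(CARD('n)+1)"
    by (simp add: power2_eq_square)
  finally show ?thesis unfolding powr_neg_mult_eq_power h_def .
qed

section \<open>Comparing dyadic levels\<close>

lemma infsum_mono_ennreal: "(\<And>x. x \<in> A \<Longrightarrow> f x \<le> g x) \<Longrightarrow> infsum f A \<le> (infsum g A :: ennreal)"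
  by (rule infsum_mono) (simp_all add: nonneg_summable_on_complete)

lemma infsum_cmult_ennreal: "infsum (\<lambda>x. c * f x) A = (c::ennreal) * infsum f A"
  by (simp add: nonneg_infsum_complete SUP_mult_left_ennreal sum_distrib_left)

lemma infsum_sum_ennreal:
  fixes g :: "'i \<Rightarrow> 'a \<Rightarrow> ennreal"
  assumes "finite I"
  shows "infsum (\<lambda>x. \<Sum>i\<in>I. g i x) A = (\<Sum>i\<in>I. infsum (g i) A)"
  using assms by (induction I rule: finite_induct) (simp_all add: infsum_add nonneg_summable_on_complete)

lemma pow2_diff_split: "m \<le> n \<Longrightarrow> (2::real)^n = 2^m * 2^(n-m)"
  by (metis le_add_diff_inverse power_add)

lemma cube_subset_parent:
  assumes "m \<le> n" "\<forall>i. 0 \<le> r i \<and> r i < 2^(n-m)"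
  shows "cube n (\<lambda>i. 2^(n-m) * \<beta> i + r i) \<subseteq> cube m \<beta>"
proof
  fix x assume x: "x \<in> cube n (\<lambda>i. 2^(n-m) * \<beta> i + r i)"
  show "x \<in> cube m \<beta>" unfolding mem_cube
  proof
    fix i
    define N where "N = (2::real)^(n-m)"
    have "r i + 1 \<le> (2::int)^(n-m)" using assms(2)[rule_format, of i] by auto
    then have "real_of_int (r i + 1) \<le> real_of_int ((2::int)^(n-m))" by (simp only: of_int_le_iff)
    then have r: "0 \<le> real_of_int (r i)" "real_of_int (r i) + 1 \<le> N"
      using assms(2) unfolding N_def by simp_all
    have xi: "(N * of_int (\<beta> i) + of_int (r i)) / 2^n \<le> x$i" "x$i \<le> (N * of_int (\<beta> i) + of_int (r i) + 1) / 2^n"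
      using x unfolding mem_cube N_def by auto
    have pow: "(2::real)^n = 2^m * N" unfolding N_def by (rule pow2_diff_split[OF assms(1)])
    have "of_int (\<beta> i) / 2^m = (N * of_int (\<beta> i)) / 2^n" unfolding pow N_def by simp
    also have "\<dots> \<le> (N * of_int (\<beta> i) + of_int (r i)) / 2^n" using r by (simp add: divide_right_mono)
    finally have lower: "of_int (\<beta> i) / 2^m \<le> x$i" using xi by linarith
    have "(N * of_int (\<beta> i) + of_int (r i) + 1) / 2^n \<le> (N * of_int (\<beta> i) + N) / 2^n"
      using r by (simp add: divide_right_mono)
    also have "\<dots> = (of_int (\<beta> i) + 1) / 2^m" unfolding pow N_def by (simp add: field_simps)
    finally have upper: "x$i \<le> (of_int (\<beta> i) + 1) / 2^m" using xi by linarith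
    show "of_int (\<beta> i) / 2^m \<le> x$i \<and> x$i \<le> (of_int (\<beta> i) + 1) / 2^m" using lower upper by simp
  qed
qed

lemma cube_covered_by_children:
  assumes "n \<le> m" "x \<in> cube n \<alpha>"
  obtains r where "\<forall>i. 0 \<le> r i \<and> r i < 2^(m-n)" "x \<in> cube m (\<lambda>i. 2^(m-n) * \<alpha> i + r i)"
proof -
  define N where "N = (2::int)^(m-n)"
  have "N \<ge> 1" unfolding N_def by simp
  have pow: "(2::real)^m = 2^n * of_int N" unfolding N_def using pow2_diff_split[OF assms(1)] by simp
  define y where "y i = 2^m * x$i - of_int N * of_int (\<alpha> i)" for i
  have y: "0 \<le> y i \<and> y i \<le> of_int N" for i
  proof -
    have "of_int (\<alpha> i) \<le> 2^n * x$i" "2^n * x$i \<le> of_int (\<alpha> i) + 1"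
      using assms(2) unfolding mem_cube by (simp_all add: field_simps)
    then have "of_int N * of_int (\<alpha> i) \<le> of_int N * (2^n * x$i)"
      "of_int N * (2^n * x$i) \<le> of_int N * (of_int (\<alpha> i) + 1)"
      using \<open>N \<ge> 1\<close> by (simp_all add: mult_left_mono)
    then show ?thesis unfolding y_def pow by (simp add: algebra_simps)
  qed
  (* points on an upper face would get the digit N; the min puts them into the last child *)
  define r where "r i = min (N - 1) \<lfloor>y i\<rfloor>" for i
  have r: "0 \<le> r i \<and> r i < N \<and> of_int (r i) \<le> y i \<and> y i \<le> of_int (r i) + 1" for i
  proof (cases "\<lfloor>y i\<rfloor> \<le> N - 1")
    case True
    then show ?thesis unfolding r_def using y[of i] by (auto simp: min_def) linarith+
  next
    case False
    then have "of_int N \<le> (of_int \<lfloor>y i\<rfloor> :: real)" by simp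
    then have "y i = of_int N" using y[of i] of_int_floor_le[of "y i"] by linarith
    then show ?thesis unfolding r_def using False \<open>N \<ge> 1\<close> by (auto simp: min_def)
  qed
  have "x \<in> cube m (\<lambda>i. N * \<alpha> i + r i)" unfolding mem_cube
  proof
    fix i
    have "of_int (r i) \<le> y i" "y i \<le> of_int (r i) + 1" using r[of i] by auto
    then show "of_int (N * \<alpha> i + r i) / 2^m \<le> x$i \<and> x$i \<le> (of_int (N * \<alpha> i + r i) + 1) / 2^m"
      unfolding y_def by (simp add: field_simps)
  qed
  then show ?thesis using r that unfolding N_def by blast
qed

lemma infsum_split_residues:
  fixes g :: "('n::finite \<Rightarrow> int) \<Rightarrow> ennreal" and N :: int
  assumes N: "N \<ge> 1"
  shows "infsum g UNIV = infsum (\<lambda>\<beta>. \<Sum>r\<in>PiE UNIV (\<lambda>_. {0..<N}). g (\<lambda>i. N * \<beta> i + r i)) UNIV"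
proof -
  define R where "R = PiE (UNIV::'n set) (\<lambda>_. {0..<N})"
  have R: "r \<in> R \<longleftrightarrow> (\<forall>i. 0 \<le> r i \<and> r i < N)" for r
    unfolding R_def by (simp add: PiE_UNIV_domain Pi_iff)
  have "finite R" unfolding R_def by (rule finite_PiE) simp_all
  define \<phi> where "\<phi> r \<beta> = (\<lambda>i. N * \<beta> i + r i)" for r \<beta> :: "'n \<Rightarrow> int"
  have residue: "(N * \<beta> i + r i) mod N = r i" if "r \<in> R" for r \<beta> i
    using that N by (simp add: R)
  have cover: "UNIV = (\<Union>r\<in>R. range (\<phi> r))"
  proof (rule set_eqI, rule iffI)
    fix \<alpha> :: "'n \<Rightarrow> int"
    have "\<alpha> = \<phi> (\<lambda>i. \<alpha> i mod N) (\<lambda>i. \<alpha> i div N)" unfolding \<phi>_def by simp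
    moreover have "(\<lambda>i. \<alpha> i mod N) \<in> R" using N by (simp add: R)
    ultimately show "\<alpha> \<in> (\<Union>r\<in>R. range (\<phi> r))" by blast
  qed simp
  have disjoint: "range (\<phi> r) \<inter> range (\<phi> r') = {}" if "r \<in> R" "r' \<in> R" "r \<noteq> r'" for r r'
  proof (rule ccontr)
    assume "range (\<phi> r) \<inter> range (\<phi> r') \<noteq> {}"
    then obtain \<beta> \<beta>' where eq: "\<phi> r \<beta> = \<phi> r' \<beta>'" by blast
    have "r i = r' i" for i
      using arg_cong[OF fun_cong[OF eq, of i], of "\<lambda>a. a mod N"] residue[OF that(1)] residue[OF that(2)]
      unfolding \<phi>_def by simp
    then show False using that(3) by auto
  qed
  have "inj (\<phi> r)" for r
    using N by (auto intro!: injI simp: \<phi>_def fun_eq_iff)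
  then have "infsum g (range (\<phi> r)) = infsum (\<lambda>\<beta>. g (\<phi> r \<beta>)) UNIV" for r
    by (simp add: infsum_reindex comp_def)
  then have "infsum g UNIV = (\<Sum>r\<in>R. infsum (\<lambda>\<beta>. g (\<phi> r \<beta>)) UNIV)"
    using sum_infsum[OF \<open>finite R\<close> _ disjoint, of g] cover by (simp add: nonneg_summable_on_complete)
  also have "\<dots> = infsum (\<lambda>\<beta>. \<Sum>r\<in>R. g (\<phi> r \<beta>)) UNIV"
    by (rule infsum_sum_ennreal[symmetric, OF \<open>finite R\<close>])
  finally show ?thesis unfolding R_def \<phi>_def .
qed

definition hess_sup :: "(real^'n::finite \<Rightarrow> real) \<Rightarrow> nat \<Rightarrow> ('n \<Rightarrow> int) \<Rightarrow> ennreal" where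
  "hess_sup f n \<alpha> = (SUP x\<in>cube n \<alpha>. ennreal (hess_frob f x))"

lemma Hn_eq_infsum_hess_sup:
  fixes f :: "real^'n::finite \<Rightarrow> real"
  shows "Hn n f = ennreal (2 powr (- real n * real CARD('n))) * (\<Sum>\<^sub>\<infinity>\<alpha>. hess_sup f n \<alpha>)"
  unfolding Hn_def hess_sup_def by (rule infsum_cmult_ennreal)

lemma infsum_hess_sup_finer_le:
  fixes f :: "real^'n::finite \<Rightarrow> real"
  assumes "m \<le> n"
  shows "(\<Sum>\<^sub>\<infinity>\<alpha>. hess_sup f n \<alpha>) \<le> of_nat ((2^(n-m))^CARD('n)) * (\<Sum>\<^sub>\<infinity>\<beta>. hess_sup f m \<beta>)"
proof -
  define N where "N = (2::int)^(n-m)"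
  define R where "R = PiE (UNIV::'n set) (\<lambda>_. {0..<N})"
  have R: "r \<in> R \<longleftrightarrow> (\<forall>i. 0 \<le> r i \<and> r i < N)" for r
    unfolding R_def by (simp add: PiE_UNIV_domain Pi_iff)
  have "card R = (nat N)^CARD('n)" unfolding R_def by (simp add: card_PiE)
  also have "nat N = 2^(n-m)" unfolding N_def by (simp add: nat_power_eq)
  finally have card_R: "card R = (2^(n-m))^CARD('n)" .
  have "(\<Sum>\<^sub>\<infinity>\<alpha>. hess_sup f n \<alpha>) = (\<Sum>\<^sub>\<infinity>\<beta>. \<Sum>r\<in>R. hess_sup f n (\<lambda>i. N * \<beta> i + r i))"
    unfolding R_def by (rule infsum_split_residues) (simp add: N_def)
  also have "\<dots> \<le> (\<Sum>\<^sub>\<infinity>\<beta>. \<Sum>r\<in>R. hess_sup f m \<beta>)"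
  proof (rule infsum_mono_ennreal, rule sum_mono)
    fix \<beta> r assume "r \<in> R"
    then have "cube n (\<lambda>i. N * \<beta> i + r i) \<subseteq> cube m \<beta>"
      using cube_subset_parent[OF assms, of r \<beta>] R unfolding N_def by simp
    then show "hess_sup f n (\<lambda>i. N * \<beta> i + r i) \<le> hess_sup f m \<beta>"
      unfolding hess_sup_def by (rule SUP_subset_mono) simp
  qed
  also have "\<dots> = of_nat (card R) * (\<Sum>\<^sub>\<infinity>\<beta>. hess_sup f m \<beta>)"
    by (simp add: infsum_cmult_ennreal)
  finally show ?thesis unfolding card_R .
qed

lemma infsum_hess_sup_coarser_le:
  fixes f :: "real^'n::finite \<Rightarrow> real"
  assumes "n \<le> m"
  shows "(\<Sum>\<^sub>\<infinity>\<alpha>. hess_sup f n \<alpha>) \<le> (\<Sum>\<^sub>\<infinity>\<beta>. hess_sup f m \<beta>)"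
proof -
  define N where "N = (2::int)^(m-n)"
  define R where "R = PiE (UNIV::'n set) (\<lambda>_. {0..<N})"
  have R: "r \<in> R \<longleftrightarrow> (\<forall>i. 0 \<le> r i \<and> r i < N)" for r
    unfolding R_def by (simp add: PiE_UNIV_domain Pi_iff)
  have "finite R" unfolding R_def by (rule finite_PiE) simp_all
  have "(\<Sum>\<^sub>\<infinity>\<alpha>. hess_sup f n \<alpha>) \<le> (\<Sum>\<^sub>\<infinity>\<alpha>. \<Sum>r\<in>R. hess_sup f m (\<lambda>i. N * \<alpha> i + r i))"
  proof (rule infsum_mono_ennreal)
    fix \<alpha> :: "'n \<Rightarrow> int"
    show "hess_sup f n \<alpha> \<le> (\<Sum>r\<in>R. hess_sup f m (\<lambda>i. N * \<alpha> i + r i))"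
      unfolding hess_sup_def[of f n]
    proof (rule SUP_least)
      fix x assume "x \<in> cube n \<alpha>"
      then obtain r where r: "\<forall>i. 0 \<le> r i \<and> r i < N" "x \<in> cube m (\<lambda>i. N * \<alpha> i + r i)"
        using cube_covered_by_children[OF assms] unfolding N_def by blast
      have "ennreal (hess_frob f x) \<le> hess_sup f m (\<lambda>i. N * \<alpha> i + r i)"
        unfolding hess_sup_def using r(2) by (rule SUP_upper)
      also have "\<dots> \<le> (\<Sum>r\<in>R. hess_sup f m (\<lambda>i. N * \<alpha> i + r i))"
        by (rule member_le_sum) (use r(1) R \<open>finite R\<close> in auto)
      finally show "ennreal (hess_frob f x) \<le> (\<Sum>r\<in>R. hess_sup f m (\<lambda>i. N * \<alpha> i + r i))" .
    qed
  qed
  also have "\<dots> = (\<Sum>\<^sub>\<infinity>\<beta>. hess_sup f m \<beta>)"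
    unfolding R_def by (rule infsum_split_residues[symmetric]) (simp add: N_def)
  finally show ?thesis .
qed

lemma Hn_le_infsum_hess_sup:
  fixes f :: "real^'n::finite \<Rightarrow> real"
  shows "Hn n f \<le> (\<Sum>\<^sub>\<infinity>\<beta>. hess_sup f m \<beta>)"
proof -
  define h where "h = (2::real) powr - real n"
  have "0 < h" "h \<le> 1" unfolding h_def powr_neg_nat_eq by simp_all
  have Hn: "Hn n f = ennreal (h^CARD('n)) * (\<Sum>\<^sub>\<infinity>\<alpha>. hess_sup f n \<alpha>)"
    unfolding Hn_eq_infsum_hess_sup powr_neg_mult_eq_power h_def ..
  show ?thesis
  proof (cases "m \<le> n")
    case True
    define P where "P = ((2::nat)^(n-m))^CARD('n)"
    have "h * 2^(n-m) \<le> 1"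
      using power_increasing[of "n-m" n "2::real"] unfolding h_def powr_neg_nat_eq by simp
    then have "(h * 2^(n-m))^CARD('n) \<le> 1" using \<open>0 < h\<close> by (intro power_le_one) simp_all
    then have "h^CARD('n) * real P \<le> 1" unfolding P_def by (simp add: power_mult_distrib)
    have "Hn n f \<le> ennreal (h^CARD('n)) * (of_nat P * (\<Sum>\<^sub>\<infinity>\<beta>. hess_sup f m \<beta>))"
      unfolding Hn P_def by (rule mult_left_mono[OF infsum_hess_sup_finer_le[OF True]]) simp
    also have "\<dots> = ennreal (h^CARD('n) * real P) * (\<Sum>\<^sub>\<infinity>\<beta>. hess_sup f m \<beta>)"
      using \<open>0 < h\<close> by (simp add: ennreal_mult ennreal_of_nat_eq_real_of_nat mult.assoc)
    also have "\<dots> \<le> 1 * (\<Sum>\<^sub>\<infinity>\<beta>. hess_sup f m \<beta>)"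
      using \<open>h^CARD('n) * real P \<le> 1\<close> by (intro mult_right_mono) (simp_all add: ennreal_le_1)
    finally show ?thesis by simp
  next
    case False
    have "h^CARD('n) \<le> 1" using \<open>0 < h\<close> \<open>h \<le> 1\<close> by (intro power_le_one) simp_all
    then have "Hn n f \<le> 1 * (\<Sum>\<^sub>\<infinity>\<alpha>. hess_sup f n \<alpha>)"
      unfolding Hn by (intro mult_right_mono) (simp_all add: ennreal_le_1)
    also have "\<dots> \<le> (\<Sum>\<^sub>\<infinity>\<beta>. hess_sup f m \<beta>)"
      using False by (simp add: infsum_hess_sup_coarser_le)
    finally show ?thesis .
  qed
qed

section \<open>Summing the local estimates\<close>

lemma dhat_grad_error_le_hess_sup:
  fixes f :: "real^'n::finite \<Rightarrow> real"
  assumes f: "C2 f"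
  shows "ennreal \<bar>norm (dhat n \<alpha> f) - 2 powr (- real n * real CARD('n)) * norm (grad f (xpt n \<alpha>))\<bar>
     \<le> ennreal (real CARD('n)^2 * (2 powr - real n)^(CARD('n)+1)) * hess_sup f n \<alpha>"
proof (cases "hess_sup f n \<alpha>" rule: ennreal_cases)
  case (real M)
  have "\<forall>x\<in>cube n \<alpha>. hess_frob f x \<le> M"
    using SUP_upper[of _ "cube n \<alpha>" "\<lambda>x. ennreal (hess_frob f x)"] real
    unfolding hess_sup_def by (metis ennreal_le_iff)
  then have "\<bar>norm (dhat n \<alpha> f) - 2 powr (- real n * real CARD('n)) * norm (grad f (xpt n \<alpha>))\<bar>
     \<le> real CARD('n)^2 * (2 powr - real n)^(CARD('n)+1) * M"
    using dhat_grad_error_cube[OF f] by (simp add: algebra_simps)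
  then show ?thesis
    using real by (simp add: ennreal_leI ennreal_mult''[symmetric])
next
  case top
  then show ?thesis by (simp add: ennreal_mult_top)
qed

lemma infsum_dhat_grad_error_le_Hn:
  fixes f :: "real^'n::finite \<Rightarrow> real"
  assumes f: "C2 f"
  shows "(\<Sum>\<^sub>\<infinity>\<alpha>. ennreal \<bar>norm (dhat n \<alpha> f) - 2 powr (- real n * real CARD('n)) * norm (grad f (xpt n \<alpha>))\<bar>)
     \<le> ennreal (real CARD('n)^2 * 2 powr - real n) * Hn n f"
proof -
  define h where "h = (2::real) powr - real n"
  have "(\<Sum>\<^sub>\<infinity>\<alpha>. ennreal \<bar>norm (dhat n \<alpha> f) - 2 powr (- real n * real CARD('n)) * norm (grad f (xpt n \<alpha>))\<bar>)
     \<le> (\<Sum>\<^sub>\<infinity>\<alpha>. ennreal (real CARD('n)^2 * h^(CARD('n)+1)) * hess_sup f n \<alpha>)"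
    unfolding h_def by (rule infsum_mono_ennreal) (rule dhat_grad_error_le_hess_sup[OF f])
  also have "\<dots> = ennreal (real CARD('n)^2 * h * h^CARD('n)) * (\<Sum>\<^sub>\<infinity>\<alpha>. hess_sup f n \<alpha>)"
    by (simp add: infsum_cmult_ennreal mult.assoc)
  also have "\<dots> = ennreal (real CARD('n)^2 * h) * (ennreal (h^CARD('n)) * (\<Sum>\<^sub>\<infinity>\<alpha>. hess_sup f n \<alpha>))"
    unfolding h_def by (simp add: ennreal_mult mult.assoc)
  also have "\<dots> = ennreal (real CARD('n)^2 * h) * Hn n f"
    unfolding Hn_eq_infsum_hess_sup powr_neg_mult_eq_power h_def ..
  finally show ?thesis unfolding h_def .
qed

lemma continuous_nonneg_nn_integral_eq_0:
  fixes g :: "'a::euclidean_space \<Rightarrow> real"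
  assumes g: "continuous_on UNIV g" and nonneg: "\<And>x. 0 \<le> g x"
    and zero: "(\<integral>\<^sup>+ x. ennreal (g x) \<partial>lborel) = 0"
  shows "g x = 0"
proof (rule ccontr)
  assume "g x \<noteq> 0"
  then have "0 < g x" using nonneg[of x] by simp
  then obtain d where "0 < d" and d: "\<forall>y. dist y x < d \<longrightarrow> dist (g y) (g x) < g x / 2"
    using g unfolding continuous_on_iff by (meson UNIV_I half_gt_zero)
  have "g x / 2 \<le> g y" if "y \<in> ball x d" for y
  proof -
    have "\<bar>g y - g x\<bar> < g x / 2" using d that by (simp add: dist_commute dist_real_def)
    then show ?thesis by linarith
  qed
  then have le: "(\<integral>\<^sup>+ y. ennreal (g x / 2) * indicator (ball x d) y \<partial>lborel) \<le> (\<integral>\<^sup>+ y. ennreal (g y) \<partial>lborel)"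
    by (intro nn_integral_mono) (auto simp: indicator_def intro!: ennreal_leI)
  have "0 < ennreal (g x / 2 * measure lborel (ball x d))"
    using content_ball_pos[OF \<open>0 < d\<close>] \<open>0 < g x\<close> by simp
  also have "\<dots> = (\<integral>\<^sup>+ y. ennreal (g x / 2) * indicator (ball x d) y \<partial>lborel)"
    using emeasure_lborel_ball_finite[of x d] \<open>0 < g x\<close>
    by (simp add: nn_integral_cmult_indicator emeasure_eq_ennreal_measure flip: ennreal_mult)
  finally show False using le zero by simp
qed

lemma ennreal_bound_absorb_const:
  fixes I :: ennreal and \<tau> :: real
  assumes "0 \<le> \<tau>" and "I = 0 \<Longrightarrow> \<tau> = 0"
  obtains C where "C > 0" "\<And>h. 0 \<le> h \<Longrightarrow> ennreal (h * \<tau>) \<le> ennreal (h * C) * I"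
proof (cases I rule: ennreal_cases)
  case top
  show ?thesis
  proof (rule that[of 1])
    show "ennreal (h * \<tau>) \<le> ennreal (h * 1) * I" if "0 \<le> h" for h
      using that top by (cases "h = 0") (simp_all add: ennreal_mult_top)
  qed simp
next
  case (real i)
  show ?thesis
  proof (rule that[of "\<tau> / i + 1"])
    show "0 < \<tau> / i + 1" using assms real by (simp add: add_nonneg_pos)
    show "ennreal (h * \<tau>) \<le> ennreal (h * (\<tau> / i + 1)) * I" if "0 \<le> h" for h
    proof (cases "i = 0")
      case True
      then show ?thesis using assms real by simp
    next
      case False
      then have "h * \<tau> \<le> h * (\<tau> / i + 1) * i"
        using real \<open>0 \<le> h\<close> by (simp add: field_simps)
      then show ?thesis
        using real \<open>0 \<le> h\<close> assms(1) \<open>i \<noteq> 0\<close> by (simp add: ennreal_mult[symmetric] ennreal_leI)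
    qed
  qed
qed

theorem lemma4p3:
  fixes f :: "real^'n::finite \<Rightarrow> real"
  assumes "C2 f"
    and "\<exists>n. Hn n f < \<infinity>"
  shows "\<forall>n0::nat. \<exists>C>0. \<forall>n\<ge>n0.
    (\<Sum>\<^sub>\<infinity>\<alpha>\<in>(UNIV :: ('n \<Rightarrow> int) set).
        ennreal \<bar>norm (dhat n \<alpha> f) - 2 powr (- real n * real CARD('n)) * norm (grad f (xpt n \<alpha>))\<bar>)
    \<le> ennreal (2 powr (- real n) * C) * (\<integral>\<^sup>+ x. ennreal (hess_frob f x) \<partial>lborel)"
proof -
  obtain m where "Hn m f < \<infinity>" using assms(2) by blast
  then have "(\<Sum>\<^sub>\<infinity>\<beta>. hess_sup f m \<beta>) \<noteq> \<infinity>"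
    unfolding Hn_eq_infsum_hess_sup by (auto simp: ennreal_mult_top)
  then obtain T where "0 \<le> T" and T: "(\<Sum>\<^sub>\<infinity>\<beta>. hess_sup f m \<beta>) = ennreal T"
    by (cases "\<Sum>\<^sub>\<infinity>\<beta>. hess_sup f m \<beta>") auto
  have bound: "(\<Sum>\<^sub>\<infinity>\<alpha>. ennreal \<bar>norm (dhat n \<alpha> f) - 2 powr (- real n * real CARD('n)) * norm (grad f (xpt n \<alpha>))\<bar>)
      \<le> ennreal (2 powr - real n * (real CARD('n)^2 * T))" for n
    using order_trans[OF infsum_dhat_grad_error_le_Hn[OF assms(1)]
        mult_left_mono[OF Hn_le_infsum_hess_sup[of n f m]]] T \<open>0 \<le> T\<close>
    by (simp add: ennreal_mult[symmetric] mult_ac)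
  have "T = 0" if "(\<integral>\<^sup>+ x. ennreal (hess_frob f x) \<partial>lborel) = 0"
  proof -
    have "hess_frob f x = 0" for x
      using continuous_nonneg_nn_integral_eq_0[OF continuous_on_hess_frob[OF assms(1)] hess_frob_nonneg that] .
    then have "hess_sup f m = (\<lambda>_. 0)" by (simp add: fun_eq_iff hess_sup_def flip: bot_ennreal)
    then show ?thesis using T \<open>0 \<le> T\<close> by simp
  qed
  then obtain C where "C > 0" and C: "\<And>h. 0 \<le> h \<Longrightarrow> ennreal (h * (real CARD('n)^2 * T))
      \<le> ennreal (h * C) * (\<integral>\<^sup>+ x. ennreal (hess_frob f x) \<partial>lborel)"
    using ennreal_bound_absorb_const[of "real CARD('n)^2 * T"] \<open>0 \<le> T\<close> by auto
  show ?thesis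
    using bound C[of "2 powr - real n" for n] \<open>C > 0\<close> by (meson order_trans powr_ge_zero)
qed

end
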